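(* For every positive integer $\nu$, let $$C_{\nu}:=\sup_{t\in(0,1]}\frac{\left|1-\frac{(-1)^{\nu}T_{2\nu+1}(\sqrt{t})}{(2\nu+1)\sqrt{t}}\right|}{\sqrt{t}}.$$ Then $$\frac{1}{4}\leq\frac{C_{\nu}}{2\nu+1}\leq\frac{4}{9}.$$
   Context: $T_k$ denotes the Chebyshev polynomial of the first kind, defined by $T_0(t)=1$, $T_1(t)=t$, $T_{k+1}(t)=2tT_k(t)-T_{k-1}(t)$ for $k\ge 1$; equivalently $T_k(t)=\cos(k\arccos t)$ for $t\in[-1,1]$. *)

theory Defs
  imports "HOL-Analysis.Analysis"
begin

fun cheb_T :: "nat \<Rightarrow> real \<Rightarrow> real" where
  "cheb_T 0 t = 1"
| "cheb_T (Suc 0) t = t"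
| "cheb_T (Suc (Suc k)) t = 2 * t * cheb_T (Suc k) t - cheb_T k t"

definition C_const :: "nat \<Rightarrow> real" where
  "C_const \<nu> = (SUP t\<in>{0<..1}.
     \<bar>1 - (-1) ^ \<nu> * cheb_T (2 * \<nu> + 1) (sqrt t) / ((2 * \<nu> + 1) * sqrt t)\<bar> / sqrt t)"

end

theory Submission
  imports Defs
begin

text \<open>Put \<open>n = 2\<nu> + 1\<close> and substitute \<open>t = sin\<^sup>2 y\<close> with \<open>0 < y \<le> \<pi>/2\<close>. Since
  \<open>(-1)\<^sup>\<nu> T\<^sub>n (sin y) = sin (n y)\<close> and \<open>|sin (n y)| \<le> n sin y\<close>, the quotient defining
  \<open>C\<^sub>\<nu>\<close> becomes \<open>(n sin y - sin (n y)) / (n sin\<^sup>2 y)\<close>. At \<open>y = 3\<pi>/(2n)\<close> we have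
  \<open>sin (n y) = -1\<close>, which already gives \<open>C\<^sub>\<nu> \<ge> n/4\<close>. The upper bound is
  \<open>a - sin (n y) \<le> 4/9 a\<^sup>2\<close> for \<open>a = n sin y\<close>: it is trivial for \<open>a \<ge> 3\<close> and follows from the
  triple-angle formula for \<open>n = 3\<close>; for \<open>n \<ge> 5\<close> and \<open>a < 3\<close> the angle \<open>y\<close> is small, so
  \<open>n y - a \<le> a\<^sup>3/120\<close>, and \<open>a - sin a \<le> a\<^sup>3/6\<close> finishes the estimate.\<close>

lemma cheb_T_cos: "cheb_T k (cos x) = cos (real k * x)"
proof (induction k "cos x" rule: cheb_T.induct)
  case (3 k)
  have "cos (real (Suc (Suc k)) * x) = cos (real (Suc k) * x + x)"
   and "cos (real k * x) = cos (real (Suc k) * x - x)"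
    by (simp_all add: algebra_simps)
  with 3 show ?case by (simp only: cheb_T.simps cos_add cos_diff) (simp add: algebra_simps)
qed simp_all

lemma cheb_T_odd_sin: "(-1) ^ m * cheb_T (2 * m + 1) (sin y) = sin (real (2 * m + 1) * y)"
proof -
  have "sin y = cos (pi / 2 - y)"
    by (simp add: cos_diff)
  then have "cheb_T (2 * m + 1) (sin y) = cos (real (2 * m + 1) * (pi / 2 - y))"
    by (simp only: cheb_T_cos)
  also have "real (2 * m + 1) * (pi / 2 - y) = real m * pi + (pi / 2 - real (2 * m + 1) * y)"
    by (simp add: algebra_simps)
  also have "cos \<dots> = (-1) ^ m * sin (real (2 * m + 1) * y)"
    by (simp add: cos_add cos_npi sin_npi cos_diff)
  finally show ?thesis
    by (simp flip: power_mult_distrib)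
qed

lemma abs_sin_mult_le: "\<bar>sin (real k * y)\<bar> \<le> real k * \<bar>sin y\<bar>"
proof (induction k)
  case (Suc k)
  have "sin (real (Suc k) * y) = sin (real k * y + y)"
    by (simp add: algebra_simps)
  then have "\<bar>sin (real (Suc k) * y)\<bar> = \<bar>sin (real k * y) * cos y + cos (real k * y) * sin y\<bar>"
    by (simp only: sin_add)
  also have "\<dots> \<le> \<bar>sin (real k * y)\<bar> + \<bar>sin y\<bar>"
  proof -
    have "\<bar>sin (real k * y)\<bar> * \<bar>cos y\<bar> \<le> \<bar>sin (real k * y)\<bar>"
      by (simp add: mult_left_le)
    moreover have "\<bar>cos (real k * y)\<bar> * \<bar>sin y\<bar> \<le> \<bar>sin y\<bar>"
      by (simp add: mult_left_le_one_le)
    ultimately show ?thesis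
      using abs_triangle_ineq[of "sin (real k * y) * cos y" "cos (real k * y) * sin y"]
      by (simp add: abs_mult)
  qed
  finally show ?case
    using Suc by (simp add: algebra_simps)
qed simp

lemma minus_sin_le_cube:
  fixes x :: real
  assumes "0 \<le> x"
  shows "x - sin x \<le> x ^ 3 / 6"
proof -
  have "\<bar>sin x - x\<bar> \<le> \<bar>x\<bar> ^ 3 / 6"
    using Maclaurin_sin_bound[of x 3] by (simp add: numeral_3_eq_3 sin_coeff_def)
  then show ?thesis
    using assms abs_ge_minus_self[of "sin x - x"] by simp
qed

lemma abs_sin_diff_le: "\<bar>sin u - sin v\<bar> \<le> \<bar>u - v :: real\<bar>"
proof -
  have "\<bar>sin u - sin v\<bar> = 2 * \<bar>sin ((u - v) / 2)\<bar> * \<bar>cos ((u + v) / 2)\<bar>"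
    by (simp add: sin_diff_sin abs_mult)
  also have "\<dots> \<le> 2 * \<bar>(u - v) / 2\<bar> * 1"
    by (intro mult_mono abs_sin_x_le_abs_x) auto
  finally show ?thesis by simp
qed

lemma le_sin_scaled:
  fixes y :: real
  assumes "0 < y" "y \<le> pi / 2" "sin y < 3 / 5"
  shows "y \<le> 1.076 * sin y"
proof -
  have y_small: "y < 0.65"
  proof (rule ccontr)
    assume "\<not> y < 0.65"
    then have "sin 0.65 \<le> sin y"
      using assms pi_gt3 by (subst sin_mono_le_eq) auto
    moreover have "0.65 - sin 0.65 \<le> (0.65 :: real) ^ 3 / 6"
      by (rule minus_sin_le_cube) simp
    ultimately show False
      using assms by (simp add: power3_eq_cube)
  qed
  have "y * y \<le> 0.65 * 0.65"
    using assms y_small by (intro mult_mono) auto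
  then have "y ^ 3 \<le> 0.4225 * y"
    using assms by (simp add: power3_eq_cube)
  moreover have "y - y ^ 3 / 6 \<le> sin y"
    using minus_sin_le_cube[of y] assms by simp
  ultimately show ?thesis
    using assms by simp
qed

lemma mult_sin_gap_le:
  fixes n y :: real
  assumes "5 \<le> n" "0 < y" "y \<le> pi / 2" "n * sin y < 3"
  shows "n * y - n * sin y \<le> (n * sin y) ^ 3 / 120"
proof -
  have s_pos: "0 < sin y"
    using assms pi_gt3 by (intro sin_gt_zero) auto
  have "5 * sin y \<le> n * sin y"
    using assms s_pos by (intro mult_right_mono) auto
  then have "y \<le> 1.076 * sin y"
    using assms by (intro le_sin_scaled) auto
  then have "y ^ 3 \<le> (1.076 * sin y) ^ 3"
    using assms by (intro power_mono) auto
  moreover have "y - sin y \<le> y ^ 3 / 6"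
    using minus_sin_le_cube[of y] assms by simp
  ultimately have "y - sin y \<le> 1.076 ^ 3 * sin y ^ 3 / 6"
    unfolding power_mult_distrib by linarith
  then have "n * y - n * sin y \<le> n * (1.076 ^ 3 * sin y ^ 3 / 6)"
    using assms by (simp flip: right_diff_distrib)
  also have "\<dots> = (1.076 ^ 3 / 6 / n\<^sup>2) * (n * sin y) ^ 3"
    using assms by (simp add: power_mult_distrib power2_eq_square power3_eq_cube)
  also have "\<dots> \<le> (1 / 120) * (n * sin y) ^ 3"
  proof (rule mult_right_mono)
    have "25 \<le> n\<^sup>2"
      using assms power_mono[of 5 n 2] by simp
    then have "1.076 ^ 3 / 6 / n\<^sup>2 \<le> (1.076 ^ 3 / 6 / 25 :: real)"
      by (intro divide_left_mono) auto
    also have "\<dots> \<le> 1 / 120"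
      by (simp add: power_divide)
    finally show "1.076 ^ 3 / 6 / n\<^sup>2 \<le> (1 / 120 :: real)" .
  qed (use assms s_pos in simp)
  finally show ?thesis by simp
qed

lemma minus_sin_cubic_le:
  fixes x :: real
  assumes "0 \<le> x" "x \<le> 3"
  shows "x - sin x + x ^ 3 / 120 \<le> 4 / 9 * x\<^sup>2"
proof (cases "x \<le> 2.5")
  case True
  have "x - sin x \<le> x ^ 3 / 6"
    using minus_sin_le_cube[of x] assms by simp
  moreover have "x * x\<^sup>2 \<le> 2.5 * x\<^sup>2"
    using True by (intro mult_right_mono) auto
  moreover have "x ^ 3 = x * x\<^sup>2" "0 \<le> x\<^sup>2"
    by (simp_all add: power3_eq_cube power2_eq_square)
  ultimately show ?thesis by linarith
next
  case False
  have "0 \<le> sin x"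
    using assms pi_gt3 by (intro sin_ge_zero) auto
  moreover have "x ^ 3 \<le> 27"
    using assms power_mono[of x 3 3] by simp
  moreover have "x + 27 / 120 \<le> 4 / 9 * x\<^sup>2"
  proof -
    have "0 \<le> (x - 2.5) * (4 / 9 * x + 1 / 9)"
      using False assms by simp
    also have "\<dots> = 4 / 9 * x\<^sup>2 - x - 5 / 18"
      by (simp add: field_simps power2_eq_square)
    finally show ?thesis
      by simp
  qed
  ultimately show ?thesis
    by linarith
qed

lemma mult_sin_minus_sin_mult_le:
  fixes n y :: real
  assumes "5 \<le> n" "0 < y" "y \<le> pi / 2"
  shows "n * sin y - sin (n * y) \<le> 4 / 9 * (n * sin y)\<^sup>2"
proof (cases "n * sin y < 3")
  case True
  define a where "a = n * sin y"
  have "0 < sin y"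
    using assms pi_gt3 by (intro sin_gt_zero) auto
  then have "0 \<le> a"
    using assms by (simp add: a_def)
  have "a \<le> n * y"
    unfolding a_def using assms sin_x_le_x[of y] by (intro mult_left_mono) auto
  then have "sin a - sin (n * y) \<le> n * y - a"
    using abs_sin_diff_le[of a "n * y"] by simp
  moreover have "n * y - a \<le> a ^ 3 / 120"
    unfolding a_def using assms True by (rule mult_sin_gap_le)
  moreover have "a - sin a + a ^ 3 / 120 \<le> 4 / 9 * a\<^sup>2"
    using \<open>0 \<le> a\<close> True by (intro minus_sin_cubic_le) (auto simp: a_def)
  ultimately show ?thesis
    unfolding a_def by linarith
next
  case False
  have "0 \<le> (n * sin y - 3) * (4 / 9 * (n * sin y) + 1 / 3)"
    using False by simp
  also have "\<dots> = 4 / 9 * (n * sin y)\<^sup>2 - n * sin y - 1"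
    by (simp add: field_simps power2_eq_square)
  finally show ?thesis
    using sin_ge_minus_one[of "n * y"] by linarith
qed

lemma odd_mult_sin_minus_sin_mult_le:
  fixes m :: nat and y :: real
  assumes "1 \<le> m" "0 < y" "y \<le> pi / 2"
  shows "real (2 * m + 1) * sin y - sin (real (2 * m + 1) * y)
    \<le> 4 / 9 * (real (2 * m + 1) * sin y)\<^sup>2"
proof (cases "m = 1")
  case True
  have "sin (3 * y) = 3 * sin y - 4 * sin y ^ 3"
    using cheb_T_odd_sin[of 1 y] by (simp add: numeral_3_eq_3 algebra_simps power3_eq_cube)
  moreover have "sin y ^ 3 \<le> sin y ^ 2"
    using assms pi_gt3 sin_gt_zero[of y]
    by (simp add: power3_eq_cube power2_eq_square mult_left_le_one_le)
  ultimately show ?thesis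
    using True by (simp add: power_mult_distrib)
next
  case False
  then show ?thesis
    using assms by (intro mult_sin_minus_sin_mult_le) auto
qed

text \<open>The quotient defining \<open>C\<^sub>\<nu>\<close> after the substitution \<open>t = sin\<^sup>2 y\<close>, with \<open>n = 2\<nu> + 1\<close>.\<close>
definition sin_defect :: "real \<Rightarrow> real \<Rightarrow> real" where
  "sin_defect n y = (n * sin y - sin (n * y)) / (n * (sin y)\<^sup>2)"

lemma sin_defect_odd_le:
  assumes "1 \<le> m" "0 < y" "y \<le> pi / 2"
  shows "sin_defect (real (2 * m + 1)) y \<le> 4 / 9 * real (2 * m + 1)"
proof -
  define n where "n = real (2 * m + 1)"
  have "0 < sin y"
    using assms pi_gt3 by (intro sin_gt_zero) auto
  then have "0 < n * (sin y)\<^sup>2"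
    by (simp add: n_def)
  moreover have "n * sin y - sin (n * y) \<le> 4 / 9 * n * (n * (sin y)\<^sup>2)"
    using odd_mult_sin_minus_sin_mult_le[OF assms]
    by (simp add: n_def power_mult_distrib power2_eq_square mult_ac)
  ultimately show ?thesis
    unfolding sin_defect_def n_def[symmetric] by (simp add: pos_divide_le_eq)
qed

lemma sin_defect_three_halves_pi_ge:
  fixes n :: real
  assumes "3 \<le> n"
  shows "n / 4 \<le> sin_defect n (3 * pi / (2 * n))"
proof -
  define y where "y = 3 * pi / (2 * n)"
  define x where "x = sin y"
  have "0 < y" "y \<le> pi / 2"
    using assms by (auto simp: y_def field_simps)
  then have "0 < x" "x \<le> y"
    using pi_gt3 sin_x_le_x[of y] by (auto simp: x_def intro: sin_gt_zero)
  have "n * y = 3 / 2 * pi"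
    using assms by (simp add: y_def)
  then have "sin (n * y) = - 1"
    by (simp only: sin_3over2_pi)
  then have "sin_defect n y = 1 / x + 1 / (n * x\<^sup>2)"
    using \<open>0 < x\<close> assms by (simp add: sin_defect_def x_def field_simps power2_eq_square)
  moreover have "1 / y + 1 / (n * y\<^sup>2) \<le> 1 / x + 1 / (n * x\<^sup>2)"
    using \<open>0 < x\<close> \<open>x \<le> y\<close> assms
    by (intro add_mono divide_left_mono mult_left_mono power_mono mult_pos_pos) auto
  moreover have "1 / y + 1 / (n * y\<^sup>2) = n * (2 / (3 * pi) + (2 / (3 * pi))\<^sup>2)"
    using assms by (simp add: y_def field_simps power2_eq_square)
  moreover have "1 / 4 \<le> 2 / (3 * pi) + (2 / (3 * pi))\<^sup>2"
  proof -
    have "0.21 \<le> 2 / (3 * pi)"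
      using pi_approx by (simp add: field_simps)
    then have "0.21 + 0.21\<^sup>2 \<le> 2 / (3 * pi) + (2 / (3 * pi))\<^sup>2"
      by (intro add_mono power_mono) auto
    moreover have "1 / 4 \<le> (0.21 + 0.21\<^sup>2 :: real)"
      by (simp add: power2_eq_square)
    ultimately show ?thesis
      by linarith
  qed
  then have "n / 4 \<le> n * (2 / (3 * pi) + (2 / (3 * pi))\<^sup>2)"
    using assms mult_left_mono[of "1 / 4" _ n] by simp
  ultimately show ?thesis
    unfolding y_def by linarith
qed

lemma sin_sq_image: "(\<lambda>y. (sin y)\<^sup>2) ` {0<..pi / 2} = {0<..1}"
proof
  show "(\<lambda>y. (sin y)\<^sup>2) ` {0<..pi / 2} \<subseteq> {0<..1}"
  proof (intro image_subsetI)
    fix y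
    assume "y \<in> {0<..pi / 2}"
    then have "0 < sin y"
      using pi_gt3 by (intro sin_gt_zero) auto
    then show "(sin y)\<^sup>2 \<in> {0<..1}"
      by (simp add: abs_square_le_1)
  qed
next
  show "{0<..1} \<subseteq> (\<lambda>y. (sin y)\<^sup>2) ` {0<..pi / 2}"
  proof
    fix t :: real
    assume "t \<in> {0<..1}"
    define x where "x = sqrt t"
    have "0 < x" "x \<le> 1" "t = x\<^sup>2"
      using \<open>t \<in> {0<..1}\<close> by (auto simp: x_def)
    then have "0 < arcsin x" "arcsin x \<le> pi / 2" "(sin (arcsin x))\<^sup>2 = t"
      using arcsin_less_mono[of 0 x] arcsin_ubound[of x] by simp_all
    then show "t \<in> (\<lambda>y. (sin y)\<^sup>2) ` {0<..pi / 2}"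
      by (metis greaterThanAtMost_iff image_eqI)
  qed
qed

lemma C_const_eq_SUP_sin_defect:
  "C_const \<nu> = (SUP y\<in>{0<..pi / 2}. sin_defect (real (2 * \<nu> + 1)) y)"
proof -
  define n where "n = real (2 * \<nu> + 1)"
  define F where "F t =
    \<bar>1 - (-1) ^ \<nu> * cheb_T (2 * \<nu> + 1) (sqrt t) / ((2 * real \<nu> + 1) * sqrt t)\<bar> / sqrt t" for t
  have "F ((sin y)\<^sup>2) = sin_defect n y" if "y \<in> {0<..pi / 2}" for y
  proof -
    have "0 < sin y"
      using that pi_gt3 by (intro sin_gt_zero) auto
    then have "0 < n * sin y"
      by (simp add: n_def)
    moreover have "sin (n * y) \<le> n * sin y"
      using abs_sin_mult_le[of "2 * \<nu> + 1" y] \<open>0 < sin y\<close> by (simp add: n_def)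
    ultimately have "0 \<le> 1 - sin (n * y) / (n * sin y)"
      by (simp add: pos_divide_le_eq)
    moreover have "(-1) ^ \<nu> * cheb_T (2 * \<nu> + 1) (sin y) = sin (n * y)" "2 * real \<nu> + 1 = n"
      using cheb_T_odd_sin[of \<nu> y] by (simp_all add: n_def)
    ultimately show ?thesis
      using \<open>0 < sin y\<close> by (simp add: F_def sin_defect_def field_simps power2_eq_square)
  qed
  then have "(SUP y\<in>{0<..pi / 2}. F ((sin y)\<^sup>2)) = (SUP y\<in>{0<..pi / 2}. sin_defect n y)"
    by (rule SUP_cong[OF refl])
  then show ?thesis
    unfolding C_const_def n_def F_def sin_sq_image[symmetric] image_image .
qed

theorem mainTheorem1:
  fixes \<nu> :: nat
  assumes "\<nu> \<ge> 1"
  shows "1 / 4 \<le> C_const \<nu> / (2 * real \<nu> + 1) \<and> C_const \<nu> / (2 * real \<nu> + 1) \<le> 4 / 9"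
proof -
  define n where "n = real (2 * \<nu> + 1)"
  have bound: "sin_defect n y \<le> 4 / 9 * n" if "y \<in> {0<..pi / 2}" for y
    using sin_defect_odd_le[OF assms] that by (simp add: n_def)
  have "C_const \<nu> \<le> 4 / 9 * n"
    unfolding C_const_eq_SUP_sin_defect n_def[symmetric]
    using bound by (intro cSUP_least) auto
  moreover have "n / 4 \<le> C_const \<nu>"
  proof -
    have "3 * pi / (2 * n) \<in> {0<..pi / 2}"
      using assms by (simp add: n_def field_simps)
    moreover have "bdd_above (sin_defect n ` {0<..pi / 2})"
      using bound by (intro bdd_aboveI2)
    ultimately have "sin_defect n (3 * pi / (2 * n)) \<le> C_const \<nu>"
      unfolding C_const_eq_SUP_sin_defect n_def[symmetric] by (rule cSUP_upper)
    moreover have "n / 4 \<le> sin_defect n (3 * pi / (2 * n))"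
      using assms by (intro sin_defect_three_halves_pi_ge) (simp add: n_def)
    ultimately show ?thesis
      by linarith
  qed
  moreover have "n = 2 * real \<nu> + 1" "0 < n"
    by (simp_all add: n_def)
  ultimately show ?thesis
    by (simp add: field_simps)
qed

end
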